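(* Let $\mathbb{T}=[0,2\pi)\times[0,2\pi)$ with periodic boundary conditions, let $0\le \alpha<1$ and $\kappa>0$, and consider the surface quasi-geostrophic equation $$\partial_t\theta+\mathbf{u}\cdot\nabla\theta+\kappa(-\Delta)^\alpha\theta=0,\qquad \mathbf{u}=(\partial_y,-\partial_x)(-\Delta)^{-\frac12}\theta,$$ for a scalar function $\theta(x,y,t)$ on $\mathbb{T}\times[0,\infty)$. (i) Let $c_1,\dots,c_8$ be real constants and let $n,m,k$ be integers with $nm\neq 0$, such that $n^2+m^2=k^2$ whenever $(|c_1|+|c_2|+|c_3|+|c_4|)(|c_5|+|c_6|+|c_7|+|c_8|)\neq 0$. Then $$\theta=e^{-\kappa(n^2+m^2)^\alpha t}\big(c_1\sin nx\sin my+c_2\cos nx\sin my+c_3\sin nx\cos my+c_4\cos nx\cos my\big)$$ $$\qquad+e^{-\kappa|k|^{2\alpha}t}\big(c_5\sin kx+c_6\sin ky+c_7\cos kx+c_8\cos ky\big)$$ is an exact solution of the equation on $\mathbb{T}$. (ii) Let $n,m$ be integers with $|n|+|m|\neq 0$, and let $(a_k)_{k\in\mathbb{Z}},(b_k)_{k\in\mathbb{Z}}$ be real constants with $\sum_{k\in\mathbb{Z}}|k|(a_k^2+b_k^2)<\infty$. Then $$\theta=\sum_{k\in\mathbb{Z}}e^{-\kappa(n^2k^2+m^2k^2)^\alpha t}\big(a_k\cos(knx+kmy)+b_k\sin(knx+kmy)\big)$$ solves the equation on $\mathbb{T}$.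
   Context: On the $2\pi$-periodic torus $\mathbb{T}$, the operators $(-\Delta)^\alpha$ and $(-\Delta)^{-\frac12}$ are the Fourier multipliers acting on $e^{i(px+qy)}$ by multiplication by $(p^2+q^2)^\alpha$ and $(p^2+q^2)^{-1/2}$ respectively (the latter on nonzero Fourier modes). Thus $\mathbf{u}=(\partial_y(-\Delta)^{-1/2}\theta,\,-\partial_x(-\Delta)^{-1/2}\theta)$. *)

theory Defs
  imports "HOL-Analysis.Analysis"
begin

text \<open>Fundamental domain of the torus T = [0,2pi) x [0,2pi) (closed square; boundary is null).\<close>
definition Tbox :: "(real \<times> real) set" where
  "Tbox = cbox (0,0) (2*pi, 2*pi)"

text \<open>Power with the convention x^0 = 1 (also for x = 0), so that (-Delta)^0 is the identity.\<close>
definition fpow :: "real \<Rightarrow> real \<Rightarrow> real" where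
  "fpow x a = (if a = 0 then 1 else x powr a)"

definition fcoef :: "(real \<Rightarrow> real \<Rightarrow> real) \<Rightarrow> int \<Rightarrow> int \<Rightarrow> complex" where
  "fcoef f p q = integral Tbox (\<lambda>(x,y). complex_of_real (f x y) *
       exp (- \<i> * complex_of_real (real_of_int p * x + real_of_int q * y))) / complex_of_real (4 * pi^2)"

definition frac_symbol :: "real \<Rightarrow> int \<Rightarrow> int \<Rightarrow> real" where
  "frac_symbol \<alpha> p q = fpow (real_of_int (p^2 + q^2)) \<alpha>"

text \<open>Symbol of (-Delta)^(-1/2) (acting on nonzero modes; zero mode sent to 0).\<close>
definition riesz_symbol :: "int \<Rightarrow> int \<Rightarrow> real" where
  "riesz_symbol p q = (if p = 0 \<and> q = 0 then 0 else 1 / sqrt (real_of_int (p^2 + q^2)))"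

text \<open>Fourier coefficients of u = (d_y (-Delta)^(-1/2) theta, - d_x (-Delta)^(-1/2) theta).\<close>
definition vel1_coef :: "(real \<Rightarrow> real \<Rightarrow> real) \<Rightarrow> int \<Rightarrow> int \<Rightarrow> complex" where
  "vel1_coef f p q = \<i> * of_int q * of_real (riesz_symbol p q) * fcoef f p q"

definition vel2_coef :: "(real \<Rightarrow> real \<Rightarrow> real) \<Rightarrow> int \<Rightarrow> int \<Rightarrow> complex" where
  "vel2_coef f p q = - \<i> * of_int p * of_real (riesz_symbol p q) * fcoef f p q"

text \<open>Summand of the (p,q) Fourier coefficient of u . grad theta (convolution over j + l = (p,q)).\<close>
definition transport_term :: "(real \<Rightarrow> real \<Rightarrow> real) \<Rightarrow> int \<Rightarrow> int \<Rightarrow> int \<times> int \<Rightarrow> complex" where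
  "transport_term f p q j =
     (let l1 = p - fst j; l2 = q - snd j in
       vel1_coef f (fst j) (snd j) * (\<i> * of_int l1 * fcoef f l1 l2)
     + vel2_coef f (fst j) (snd j) * (\<i> * of_int l2 * fcoef f l1 l2))"

definition transport_coef :: "(real \<Rightarrow> real \<Rightarrow> real) \<Rightarrow> int \<Rightarrow> int \<Rightarrow> complex" where
  "transport_coef f p q = infsum (transport_term f p q) UNIV"

text \<open>theta x y t is a (Fourier-weak) solution of
  d_t theta + u . grad theta + kappa (-Delta)^alpha theta = 0 on T x [0,oo):
  theta(.,.,t) is in L^2(T) for every t >= 0, the convolution defining the Fourier
  coefficients of u . grad theta converges absolutely, and every Fourier mode satisfies
  the equation (tested against e^{-i(px+qy)}) with a classical time derivative.\<close>
definition sqg_solution :: "real \<Rightarrow> real \<Rightarrow> (real \<Rightarrow> real \<Rightarrow> real \<Rightarrow> real) \<Rightarrow> bool" where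
  "sqg_solution \<kappa> \<alpha> \<theta> \<longleftrightarrow>
     (\<forall>t\<ge>0. (\<lambda>(x,y). \<theta> x y t) measurable_on Tbox
           \<and> (\<lambda>(x,y). (\<theta> x y t)^2) integrable_on Tbox
           \<and> (\<forall>p q. transport_term (\<lambda>x y. \<theta> x y t) p q summable_on UNIV)
           \<and> (\<forall>p q. ((\<lambda>s. fcoef (\<lambda>x y. \<theta> x y s) p q) has_vector_derivative
                 (- transport_coef (\<lambda>x y. \<theta> x y t) p q
                  - of_real (\<kappa> * frac_symbol \<alpha> p q) * fcoef (\<lambda>x y. \<theta> x y t) p q))
                 (at t within {0..})))"

end

theory Submission
  imports Defs
begin

text \<open>
  At every time the Fourier coefficients of \<theta> are those of the initial data damped by
  exp (- \<kappa> |(p,q)|^(2\<alpha>) t), which is exactly the linear part of the equation; so \<theta> is a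
  solution as soon as the Fourier coefficients of u \<cdot> \<nabla>\<theta> vanish. The (p,q) coefficient is
  the convolution sum over j + l = (p,q) of - |j|^(-1) \<theta>(j) \<theta>(l) (j \<times> l).
  If all active frequencies are collinear, every term vanishes since j \<times> l = 0; this is
  part (ii). If finitely many active frequencies lie on one circle, as (\<plusminus>n,\<plusminus>m), (\<plusminus>k,0),
  (0,\<plusminus>k) do when n^2 + m^2 = k^2 in part (i), then the swap j \<leftrightarrow> l keeps the weight |j|^(-1)
  and flips the sign of j \<times> l, so the sum equals its own negative. In part (ii) \<theta> is only
  given as the L^2 limit of its partial sums, and Fourier coefficients are continuous for
  L^2 convergence.
\<close>

section \<open>Plane waves and Fourier coefficients\<close>

definition wave :: "int \<times> int \<Rightarrow> real \<Rightarrow> real \<Rightarrow> complex" where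
  "wave j x y = exp (\<i> * complex_of_real (real_of_int (fst j) * x + real_of_int (snd j) * y))"

lemma wave_eq_Complex:
  "wave j x y = Complex (cos (real_of_int (fst j) * x + real_of_int (snd j) * y))
                        (sin (real_of_int (fst j) * x + real_of_int (snd j) * y))"
  unfolding wave_def
  by (simp add: exp_Euler complex_eq_iff cos_of_real sin_of_real flip: of_real_mult of_real_add)

lemma norm_wave [simp]: "norm (wave j x y) = 1"
  unfolding wave_def by (rule norm_exp_i_times)

lemma wave_mult: "wave j x y * wave l x y = wave (fst j + fst l, snd j + snd l) x y"
  unfolding wave_def by (simp add: exp_add[symmetric] algebra_simps)

lemma continuous_on_wave [continuous_intros]:
  "continuous_on S (\<lambda>z. wave j (fst z) (snd z))"
  unfolding wave_def by (intro continuous_intros)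

lemma fcoef_eq_integral_wave:
  "fcoef f p q = integral Tbox (\<lambda>(x,y). f x y *\<^sub>R wave (- p, - q) x y) / complex_of_real (4 * pi^2)"
  unfolding fcoef_def wave_def by (simp add: scaleR_conv_of_real algebra_simps)

lemma has_integral_exp_int_period:
  "((\<lambda>x. exp (\<i> * complex_of_real (real_of_int a * x))) has_integral
      (if a = 0 then complex_of_real (2 * pi) else 0)) {0..2 * pi}"
proof (cases "a = 0")
  case True
  then show ?thesis
    using has_integral_const_real[of "1::complex" 0 "2 * pi"] by (simp add: scaleR_conv_of_real)
next
  case False
  define F where "F x = exp (\<i> * complex_of_real (real_of_int a * x)) / (\<i> * of_int a)" for x
  have "((\<lambda>z. exp (\<i> * (of_int a * z)) / (\<i> * of_int a)) has_field_derivative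
          exp (\<i> * (of_int a * of_real x))) (at (of_real x))" for x
    using False by (auto intro!: derivative_eq_intros simp: algebra_simps)
  then have "(F has_vector_derivative exp (\<i> * complex_of_real (real_of_int a * x))) (at x within {0..2 * pi})" for x
    unfolding F_def by (auto intro!: has_vector_derivative_real_field)
  then have "((\<lambda>x. exp (\<i> * complex_of_real (real_of_int a * x))) has_integral (F (2 * pi) - F 0)) {0..2 * pi}"
    by (intro fundamental_theorem_of_calculus) auto
  moreover have "exp (\<i> * complex_of_real (real_of_int a * (2 * pi))) = 1"
    using exp_integer_2pi[of "of_int a"] by (simp add: mult_ac)
  ultimately show ?thesis
    using False by (simp add: F_def)
qed

lemma integral_wave_Tbox:
  "integral Tbox (\<lambda>(x,y). wave j x y) = (if j = (0,0) then complex_of_real (4 * pi^2) else 0)"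
proof -
  have "integral Tbox (\<lambda>(x,y). wave j x y)
      = integral {0..2 * pi} (\<lambda>x. integral {0..2 * pi} (\<lambda>y. wave j x y))"
    unfolding Tbox_def case_prod_beta'
    by (subst integral_prod_continuous) (auto intro: continuous_intros)
  also have "\<dots> = integral {0..2 * pi} (\<lambda>x. exp (\<i> * complex_of_real (real_of_int (fst j) * x)))
                * integral {0..2 * pi} (\<lambda>y. exp (\<i> * complex_of_real (real_of_int (snd j) * y)))"
    by (simp add: wave_def distrib_left exp_add integral_mult_left integral_mult_right)
  also have "\<dots> = (if j = (0,0) then complex_of_real (4 * pi^2) else 0)"
    unfolding integral_unique[OF has_integral_exp_int_period]
    by (cases j) (auto simp: power2_eq_square)
  finally show ?thesis .
qed

lemma fcoef_wave_sum:
  assumes "finite I"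
    and f: "\<And>x y. complex_of_real (f x y) = (\<Sum>i\<in>I. c i * wave (\<omega> i) x y)"
  shows "fcoef f p q = (\<Sum>i\<in>{i\<in>I. \<omega> i = (p,q)}. c i)"
proof -
  have "(\<lambda>(x,y). f x y *\<^sub>R wave (- p, - q) x y)
      = (\<lambda>(x,y). \<Sum>i\<in>I. c i * wave (fst (\<omega> i) - p, snd (\<omega> i) - q) x y)"
    by (simp add: scaleR_conv_of_real f sum_distrib_right mult.assoc wave_mult)
  then have "fcoef f p q
      = (\<Sum>i\<in>I. c i * integral Tbox (\<lambda>(x,y). wave (fst (\<omega> i) - p, snd (\<omega> i) - q) x y))
        / complex_of_real (4 * pi^2)"
    unfolding fcoef_eq_integral_wave Tbox_def case_prod_beta'
    by (simp add: integral_sum[OF \<open>finite I\<close>] integrable_continuous continuous_intros)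
  also have "\<dots> = (\<Sum>i\<in>I. if \<omega> i = (p,q) then c i else 0)"
    unfolding integral_wave_Tbox sum_divide_distrib by (intro sum.cong refl) (auto simp: prod_eq_iff)
  finally show ?thesis
    using \<open>finite I\<close> by (simp add: sum.inter_filter)
qed

lemma wave_uminus: "wave (- p, - q) x y = cnj (wave (p, q) x y)"
proof -
  have "real_of_int (- p) * x + real_of_int (- q) * y = - (real_of_int p * x + real_of_int q * y)"
    by simp
  then show ?thesis
    unfolding wave_eq_Complex fst_conv snd_conv by (simp only: cos_minus sin_minus complex_cnj)
qed

lemma cos_sin_eq_wave_sum:
  fixes p q :: int and x y :: real
  shows "complex_of_real (a * cos (p * x + q * y) + b * sin (p * x + q * y))
    = (a - \<i> * b) / 2 * wave (p, q) x y + (a + \<i> * b) / 2 * wave (- p, - q) x y"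
  unfolding wave_uminus unfolding wave_eq_Complex
  by (simp add: complex_eq_iff algebra_simps add_divide_distrib diff_divide_distrib)

lemma fcoef_cos_sin_sum:
  assumes "finite K"
  shows "fcoef (\<lambda>x y. \<Sum>k\<in>K. A k * cos (real_of_int (fst (\<omega> k)) * x + real_of_int (snd (\<omega> k)) * y)
                              + B k * sin (real_of_int (fst (\<omega> k)) * x + real_of_int (snd (\<omega> k)) * y)) p q
    = (\<Sum>k\<in>{k\<in>K. \<omega> k = (p, q)}. (A k - \<i> * B k) / 2) + (\<Sum>k\<in>{k\<in>K. \<omega> k = (- p, - q)}. (A k + \<i> * B k) / 2)"
proof -
  define \<omega>' where "\<omega>' i = (if snd i then \<omega> (fst i) else (- fst (\<omega> (fst i)), - snd (\<omega> (fst i))))" for i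
  define c where "c i = (if snd i then (A (fst i) - \<i> * B (fst i)) / 2 else (A (fst i) + \<i> * B (fst i)) / 2)" for i
  have "fcoef (\<lambda>x y. \<Sum>k\<in>K. A k * cos (real_of_int (fst (\<omega> k)) * x + real_of_int (snd (\<omega> k)) * y)
                              + B k * sin (real_of_int (fst (\<omega> k)) * x + real_of_int (snd (\<omega> k)) * y)) p q
      = (\<Sum>i\<in>{i\<in>K \<times> UNIV. \<omega>' i = (p, q)}. c i)"
  proof (rule fcoef_wave_sum)
    show "finite (K \<times> (UNIV :: bool set))" using assms by simp
    have "complex_of_real (A k * cos (real_of_int (fst (\<omega> k)) * x + real_of_int (snd (\<omega> k)) * y)
                         + B k * sin (real_of_int (fst (\<omega> k)) * x + real_of_int (snd (\<omega> k)) * y))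
        = (\<Sum>s\<in>UNIV. c (k, s) * wave (\<omega>' (k, s)) x y)" for k x y
      using cos_sin_eq_wave_sum[of "A k" "fst (\<omega> k)" x "snd (\<omega> k)" y "B k"]
      by (simp add: UNIV_bool \<omega>'_def c_def)
    then show "complex_of_real (\<Sum>k\<in>K. A k * cos (real_of_int (fst (\<omega> k)) * x + real_of_int (snd (\<omega> k)) * y)
                              + B k * sin (real_of_int (fst (\<omega> k)) * x + real_of_int (snd (\<omega> k)) * y))
        = (\<Sum>i\<in>K \<times> UNIV. c i * wave (\<omega>' i) x y)" for x y
      by (simp add: sum.cartesian_product)
  qed
  also have "\<dots> = (\<Sum>k\<in>K. \<Sum>s\<in>UNIV. if \<omega>' (k, s) = (p, q) then c (k, s) else 0)"
    using assms by (simp add: sum.inter_filter sum.cartesian_product)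
  also have "\<dots> = (\<Sum>k\<in>K. (if \<omega> k = (p, q) then (A k - \<i> * B k) / 2 else 0)
                      + (if \<omega> k = (- p, - q) then (A k + \<i> * B k) / 2 else 0))"
    by (intro sum.cong refl) (auto simp: UNIV_bool \<omega>'_def c_def prod_eq_iff)
  finally show ?thesis
    using assms by (simp add: sum.distrib sum.inter_filter)
qed

section \<open>The transport term\<close>

definition fourier_support :: "(real \<Rightarrow> real \<Rightarrow> real) \<Rightarrow> (int \<times> int) set" where
  "fourier_support f = {j. fcoef f (fst j) (snd j) \<noteq> 0}"

lemma transport_term_eq_cross:
  "transport_term f p q j =
     - complex_of_real (riesz_symbol (fst j) (snd j)) * fcoef f (fst j) (snd j)
       * fcoef f (p - fst j) (q - snd j) * of_int (snd j * (p - fst j) - fst j * (q - snd j))"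
  unfolding transport_term_def vel1_coef_def vel2_coef_def Let_def by (simp add: algebra_simps)

lemma transport_coef_collinear_support:
  assumes "\<And>j l. j \<in> fourier_support f \<Longrightarrow> l \<in> fourier_support f \<Longrightarrow> fst j * snd l = snd j * fst l"
  shows "transport_term f p q summable_on UNIV" and "transport_coef f p q = 0"
proof -
  have "transport_term f p q j = 0" for j
  proof (cases "j \<in> fourier_support f \<and> (p - fst j, q - snd j) \<in> fourier_support f")
    case True
    then have "snd j * (p - fst j) - fst j * (q - snd j) = 0"
      using assms[of j "(p - fst j, q - snd j)"] by (simp add: algebra_simps)
    then show ?thesis by (simp add: transport_term_eq_cross)
  qed (auto simp: transport_term_eq_cross fourier_support_def)
  then have "transport_term f p q = (\<lambda>_. 0)" by auto
  then show "transport_term f p q summable_on UNIV" and "transport_coef f p q = 0"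
    unfolding transport_coef_def by simp_all
qed

lemma transport_coef_circle_support:
  assumes fin: "finite (fourier_support f)"
    and circle: "\<And>j. j \<in> fourier_support f \<Longrightarrow> j \<noteq> (0,0) \<Longrightarrow> (fst j)^2 + (snd j)^2 = r"
  shows "transport_term f p q summable_on UNIV" and "transport_coef f p q = 0"
proof -
  let ?T = "transport_term f p q"
  have "?T summable_on fourier_support f" using fin by simp
  moreover have "?T summable_on fourier_support f \<longleftrightarrow> ?T summable_on UNIV"
    by (rule summable_on_cong_neutral) (auto simp: transport_term_eq_cross fourier_support_def)
  ultimately show "?T summable_on UNIV" by simp
  define \<sigma> where "\<sigma> j = (p - fst j, q - snd j)" for j :: "int \<times> int"
  have "bij \<sigma>"
    by (rule bij_betwI[where g = \<sigma>]) (auto simp: \<sigma>_def)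
  have antisymmetric: "?T (\<sigma> j) = - ?T j" for j
  proof (cases "j \<in> fourier_support f \<and> \<sigma> j \<in> fourier_support f \<and> j \<noteq> (0,0) \<and> \<sigma> j \<noteq> (0,0)")
    case True
    then have "riesz_symbol (fst j) (snd j) = riesz_symbol (p - fst j) (q - snd j)"
      using circle[of j] circle[of "\<sigma> j"] by (auto simp: riesz_symbol_def \<sigma>_def prod_eq_iff)
    then show ?thesis
      by (simp add: transport_term_eq_cross \<sigma>_def algebra_simps)
  next
    case False
    then show ?thesis
      by (auto simp: transport_term_eq_cross \<sigma>_def fourier_support_def)
  qed
  have "infsum ?T UNIV = infsum (?T \<circ> \<sigma>) UNIV"
    using infsum_reindex_bij_betw[OF \<open>bij \<sigma>\<close>, of ?T] by (simp add: o_def)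
  also have "\<dots> = - infsum ?T UNIV"
    by (simp add: o_def antisymmetric infsum_uminus)
  finally show "transport_coef f p q = 0"
    unfolding transport_coef_def by simp
qed

lemma sqg_solutionI:
  assumes "\<And>t. t \<ge> 0 \<Longrightarrow> (\<lambda>(x,y). \<theta> x y t) measurable_on Tbox"
    and "\<And>t. t \<ge> 0 \<Longrightarrow> (\<lambda>(x,y). (\<theta> x y t)^2) integrable_on Tbox"
    and coef: "\<And>t p q. t \<ge> 0 \<Longrightarrow>
      fcoef (\<lambda>x y. \<theta> x y t) p q = complex_of_real (exp (- \<kappa> * frac_symbol \<alpha> p q * t)) * C p q"
    and "\<And>t p q. t \<ge> 0 \<Longrightarrow> transport_term (\<lambda>x y. \<theta> x y t) p q summable_on UNIV"
    and transport: "\<And>t p q. t \<ge> 0 \<Longrightarrow> transport_coef (\<lambda>x y. \<theta> x y t) p q = 0"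
  shows "sqg_solution \<kappa> \<alpha> \<theta>"
  unfolding sqg_solution_def
proof (intro allI impI conjI)
  fix t :: real and p q :: int
  assume t: "t \<ge> 0"
  show "(\<lambda>(x,y). \<theta> x y t) measurable_on Tbox" "(\<lambda>(x,y). (\<theta> x y t)^2) integrable_on Tbox"
    "transport_term (\<lambda>x y. \<theta> x y t) p q summable_on UNIV"
    using assms t by simp_all
  let ?rate = "\<kappa> * frac_symbol \<alpha> p q"
  have "((\<lambda>s. complex_of_real (exp (- ?rate * s)) * C p q) has_vector_derivative
          - complex_of_real ?rate * (complex_of_real (exp (- ?rate * t)) * C p q)) (at t within {0..})"
    by (auto intro!: derivative_eq_intros simp: algebra_simps)
  then have "((\<lambda>s. fcoef (\<lambda>x y. \<theta> x y s) p q) has_vector_derivative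
          - complex_of_real ?rate * (complex_of_real (exp (- ?rate * t)) * C p q)) (at t within {0..})"
    by (rule has_vector_derivative_transform_within[OF _ zero_less_one]) (use t in \<open>auto simp: coef\<close>)
  then show "((\<lambda>s. fcoef (\<lambda>x y. \<theta> x y s) p q) has_vector_derivative
          - transport_coef (\<lambda>x y. \<theta> x y t) p q - complex_of_real ?rate * fcoef (\<lambda>x y. \<theta> x y t) p q)
          (at t within {0..})"
    by (simp add: transport t coef)
qed

section \<open>Exact solutions with finitely many modes\<close>

lemma Tbox_sets_lebesgue [simp]: "Tbox \<in> sets lebesgue"
  unfolding Tbox_def by simp

lemma measurable_on_Tbox_if_continuous:
  fixes f :: "real \<times> real \<Rightarrow> 'b::euclidean_space"
  assumes "continuous_on Tbox f"
  shows "f measurable_on Tbox"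
  using continuous_imp_measurable_on_sets_lebesgue[OF assms] by (simp add: measurable_on_iff_borel_measurable)

lemma integrable_on_Tbox_if_measurable_bounded:
  fixes f :: "real \<times> real \<Rightarrow> 'b::euclidean_space"
  assumes "f measurable_on Tbox" and "g integrable_on Tbox" and "\<And>z. norm (f z) \<le> g z"
  shows "f integrable_on Tbox"
  using assms by (auto intro: measurable_bounded_by_integrable_imp_integrable simp: measurable_on_iff_borel_measurable)

lemma integrable_square_if_L2_close:
  fixes h s :: "real \<times> real \<Rightarrow> real"
  assumes "h measurable_on Tbox" and "continuous_on Tbox s"
    and "(\<lambda>z. (h z - s z)^2) integrable_on Tbox"
  shows "(\<lambda>z. (h z)^2) integrable_on Tbox"
proof (rule integrable_on_Tbox_if_measurable_bounded)
  have "((\<lambda>u. u^2) \<circ> h) measurable_on Tbox"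
    using assms(1) by (rule measurable_on_compose_continuous_0) (auto intro: continuous_intros)
  then show "(\<lambda>z. (h z)^2) measurable_on Tbox" by (simp add: o_def)
  have "(\<lambda>z. (s z)^2) integrable_on Tbox"
    using assms(2) unfolding Tbox_def by (intro integrable_continuous continuous_intros)
  then show "(\<lambda>z. 2 * (h z - s z)^2 + 2 * (s z)^2) integrable_on Tbox"
    using assms(3) by (intro integrable_add integrable_on_mult_right)
  show "norm ((h z)^2) \<le> 2 * (h z - s z)^2 + 2 * (s z)^2" for z
    using zero_le_power2[of "h z - 2 * s z"] by (simp add: power2_eq_square algebra_simps)
qed

lemma sqg_solution_wave_sum:
  assumes "finite I"
    and \<theta>: "\<And>x y t. complex_of_real (\<theta> x y t) =
      (\<Sum>i\<in>I. complex_of_real (exp (- \<kappa> * frac_symbol \<alpha> (fst (\<omega> i)) (snd (\<omega> i)) * t)) * c i * wave (\<omega> i) x y)"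
    and circle: "\<And>i. i \<in> I \<Longrightarrow> c i \<noteq> 0 \<Longrightarrow> \<omega> i \<noteq> (0,0) \<Longrightarrow> (fst (\<omega> i))^2 + (snd (\<omega> i))^2 = r"
  shows "sqg_solution \<kappa> \<alpha> \<theta>"
proof (rule sqg_solutionI)
  define C where "C p q = (\<Sum>i\<in>{i\<in>I. \<omega> i = (p,q)}. c i)" for p q
  fix t :: real
  have "(\<lambda>(x,y). \<theta> x y t) = (\<lambda>(x,y). Re (\<Sum>i\<in>I.
      complex_of_real (exp (- \<kappa> * frac_symbol \<alpha> (fst (\<omega> i)) (snd (\<omega> i)) * t)) * c i * wave (\<omega> i) x y))"
    by (simp only: \<theta> [symmetric] Re_complex_of_real)
  then have cont: "continuous_on Tbox (\<lambda>(x,y). \<theta> x y t)"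
    by (simp add: case_prod_beta' continuous_intros)
  then show "(\<lambda>(x,y). \<theta> x y t) measurable_on Tbox"
    by (rule measurable_on_Tbox_if_continuous)
  show "(\<lambda>(x,y). (\<theta> x y t)^2) integrable_on Tbox"
    using cont unfolding Tbox_def case_prod_beta' by (intro integrable_continuous continuous_intros)
  have coef: "fcoef (\<lambda>x y. \<theta> x y t) p q = complex_of_real (exp (- \<kappa> * frac_symbol \<alpha> p q * t)) * C p q" for p q
  proof -
    have "fcoef (\<lambda>x y. \<theta> x y t) p q = (\<Sum>i\<in>{i\<in>I. \<omega> i = (p,q)}.
        complex_of_real (exp (- \<kappa> * frac_symbol \<alpha> (fst (\<omega> i)) (snd (\<omega> i)) * t)) * c i)"
      by (rule fcoef_wave_sum[OF \<open>finite I\<close>]) (rule \<theta>)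
    also have "\<dots> = (\<Sum>i\<in>{i\<in>I. \<omega> i = (p,q)}. complex_of_real (exp (- \<kappa> * frac_symbol \<alpha> p q * t)) * c i)"
      by (rule sum.cong) auto
    finally show ?thesis
      by (simp add: C_def sum_distrib_left)
  qed
  then show "\<And>p q. t \<ge> 0 \<Longrightarrow> fcoef (\<lambda>x y. \<theta> x y t) p q = complex_of_real (exp (- \<kappa> * frac_symbol \<alpha> p q * t)) * C p q"
    by simp
  have support: "fourier_support (\<lambda>x y. \<theta> x y t) \<subseteq> \<omega> ` {i\<in>I. c i \<noteq> 0}"
  proof
    fix j assume "j \<in> fourier_support (\<lambda>x y. \<theta> x y t)"
    then have "C (fst j) (snd j) \<noteq> 0"
      by (simp add: fourier_support_def coef)
    then obtain i where "i \<in> I" "\<omega> i = j" "c i \<noteq> 0"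
      unfolding C_def by (metis (mono_tags, lifting) mem_Collect_eq prod.collapse sum.neutral)
    then show "j \<in> \<omega> ` {i\<in>I. c i \<noteq> 0}" by blast
  qed
  have finite_support: "finite (fourier_support (\<lambda>x y. \<theta> x y t))"
    by (rule finite_subset[OF support]) (simp add: \<open>finite I\<close>)
  have on_circle: "(fst j)^2 + (snd j)^2 = r" if "j \<in> fourier_support (\<lambda>x y. \<theta> x y t)" "j \<noteq> (0,0)" for j
    using support that circle by blast
  show "transport_term (\<lambda>x y. \<theta> x y t) p q summable_on UNIV" for p q
    by (rule transport_coef_circle_support(1)[OF finite_support on_circle])
  show "transport_coef (\<lambda>x y. \<theta> x y t) p q = 0" for p q
    by (rule transport_coef_circle_support(2)[OF finite_support on_circle])
qed

text \<open>The common factor e keeps these identities usable as rewrite rules underneath the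
  exponential time factors.\<close>

lemma product_trig_eq_wave_sum:
  fixes n m :: int and x y :: real
  shows "complex_of_real (e * (c1 * sin (n * x) * sin (m * y) + c2 * cos (n * x) * sin (m * y)
                        + c3 * sin (n * x) * cos (m * y) + c4 * cos (n * x) * cos (m * y)))
   = e * ((- c1 - \<i> * c2 - \<i> * c3 + c4) / 4) * wave (n, m) x y
   + e * ((c1 + \<i> * c2 - \<i> * c3 + c4) / 4) * wave (n, - m) x y
   + e * ((c1 - \<i> * c2 + \<i> * c3 + c4) / 4) * wave (- n, m) x y
   + e * ((- c1 + \<i> * c2 + \<i> * c3 + c4) / 4) * wave (- n, - m) x y"
  unfolding wave_eq_Complex
  by (simp add: complex_eq_iff cos_add sin_add cos_diff sin_diff algebra_simps diff_divide_distrib add_divide_distrib)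

lemma axis_trig_eq_wave_sum:
  fixes k :: int and x y :: real
  shows "complex_of_real (e * (c5 * sin (k * x) + c6 * sin (k * y) + c7 * cos (k * x) + c8 * cos (k * y)))
   = e * ((- \<i> * c5 + c7) / 2) * wave (k, 0) x y + e * ((\<i> * c5 + c7) / 2) * wave (- k, 0) x y
   + e * ((- \<i> * c6 + c8) / 2) * wave (0, k) x y + e * ((\<i> * c6 + c8) / 2) * wave (0, - k) x y"
  unfolding wave_eq_Complex
  by (simp add: complex_eq_iff algebra_simps diff_divide_distrib add_divide_distrib)

lemma fpow_int_square:
  fixes k :: int
  assumes "0 \<le> \<alpha>"
  shows "fpow (real_of_int (k^2)) \<alpha> = fpow (real_of_int \<bar>k\<bar>) (2 * \<alpha>)"
  using assms unfolding fpow_def by (simp add: powr_powr[symmetric] powr_numeral)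

lemma sqg_solution_product_modes:
  fixes n m k :: int
  assumes "0 \<le> \<alpha>" and "n * m \<noteq> 0"
    and resonance: "(\<bar>c1\<bar> + \<bar>c2\<bar> + \<bar>c3\<bar> + \<bar>c4\<bar>) * (\<bar>c5\<bar> + \<bar>c6\<bar> + \<bar>c7\<bar> + \<bar>c8\<bar>) \<noteq> 0 \<Longrightarrow> n^2 + m^2 = k^2"
  shows "sqg_solution \<kappa> \<alpha> (\<lambda>x y t.
          exp (- \<kappa> * fpow (real_of_int (n^2 + m^2)) \<alpha> * t) *
            (c1 * sin (n * x) * sin (m * y) + c2 * cos (n * x) * sin (m * y)
             + c3 * sin (n * x) * cos (m * y) + c4 * cos (n * x) * cos (m * y))
        + exp (- \<kappa> * fpow (real_of_int \<bar>k\<bar>) (2 * \<alpha>) * t) *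
            (c5 * sin (k * x) + c6 * sin (k * y) + c7 * cos (k * x) + c8 * cos (k * y)))"
proof -
  define \<omega> where "\<omega> i = [(n,m), (n,-m), (-n,m), (-n,-m), (k,0), (-k,0), (0,k), (0,-k)] ! i" for i
  define c where "c i = [(- c1 - \<i> * c2 - \<i> * c3 + c4) / 4, (c1 + \<i> * c2 - \<i> * c3 + c4) / 4,
      (c1 - \<i> * c2 + \<i> * c3 + c4) / 4, (- c1 + \<i> * c2 + \<i> * c3 + c4) / 4,
      (- \<i> * c5 + c7) / 2, (\<i> * c5 + c7) / 2, (- \<i> * c6 + c8) / 2, (\<i> * c6 + c8) / 2] ! i" for i
  \<comment> \<open>the squared radius of every active mode; the resonance condition is only needed
    when both groups of modes are present\<close>
  define r where "r = (if c1 = 0 \<and> c2 = 0 \<and> c3 = 0 \<and> c4 = 0 then k^2 else n^2 + m^2)"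
  have symbol_nm: "frac_symbol \<alpha> p q = fpow (real_of_int (n^2 + m^2)) \<alpha>"
    if "p = n \<or> p = - n" "q = m \<or> q = - m" for p q
    using that unfolding frac_symbol_def by auto
  have symbol_k: "frac_symbol \<alpha> p q = fpow (real_of_int \<bar>k\<bar>) (2 * \<alpha>)"
    if "(p = k \<or> p = - k) \<and> q = 0 \<or> p = 0 \<and> (q = k \<or> q = - k)" for p q
    using that fpow_int_square[OF \<open>0 \<le> \<alpha>\<close>, of k] unfolding frac_symbol_def by auto
  have groups: "(c1 = 0 \<and> c2 = 0 \<and> c3 = 0 \<and> c4 = 0) \<or> (c5 = 0 \<and> c6 = 0 \<and> c7 = 0 \<and> c8 = 0)
      \<or> n^2 + m^2 = k^2"
    using resonance by (smt (verit) mult_eq_0_iff)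
  show ?thesis
  proof (rule sqg_solution_wave_sum[where I = "{..<8}" and \<omega> = \<omega> and c = c and r = r])
    fix x y t :: real
    show "complex_of_real (exp (- \<kappa> * fpow (real_of_int (n^2 + m^2)) \<alpha> * t) *
            (c1 * sin (n * x) * sin (m * y) + c2 * cos (n * x) * sin (m * y)
             + c3 * sin (n * x) * cos (m * y) + c4 * cos (n * x) * cos (m * y))
        + exp (- \<kappa> * fpow (real_of_int \<bar>k\<bar>) (2 * \<alpha>) * t) *
            (c5 * sin (k * x) + c6 * sin (k * y) + c7 * cos (k * x) + c8 * cos (k * y)))
      = (\<Sum>i\<in>{..<8}. complex_of_real (exp (- \<kappa> * frac_symbol \<alpha> (fst (\<omega> i)) (snd (\<omega> i)) * t)) * c i * wave (\<omega> i) x y)"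
      unfolding of_real_add[of "_ * _"] product_trig_eq_wave_sum
      unfolding axis_trig_eq_wave_sum
      by (simp add: lessThan_nat_numeral \<omega>_def c_def symbol_nm symbol_k algebra_simps)
  next
    fix i assume "i \<in> {..<8::nat}" "c i \<noteq> 0"
    then show "(fst (\<omega> i))^2 + (snd (\<omega> i))^2 = r"
      using groups by (auto simp: lessThan_nat_numeral \<omega>_def c_def r_def)
  qed simp
qed

section \<open>Fourier coefficients of L^2 limits and solutions along a line\<close>

lemma abs_le_AM_GM:
  fixes d \<delta> :: real
  assumes "\<delta> > 0"
  shows "\<bar>d\<bar> \<le> \<delta> / 2 + d^2 / (2 * \<delta>)"
proof -
  have "2 * \<delta> * \<bar>d\<bar> \<le> \<delta>^2 + d^2"
    using zero_le_power2[of "\<bar>d\<bar> - \<delta>"] by (simp add: power2_eq_square algebra_simps)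
  then show ?thesis
    using assms by (simp add: field_simps power2_eq_square)
qed

lemma norm_fcoef_diff_le:
  fixes h s :: "real \<Rightarrow> real \<Rightarrow> real"
  assumes h: "(\<lambda>(x,y). h x y) measurable_on Tbox" and s: "continuous_on Tbox (\<lambda>(x,y). s x y)"
    and L2: "(\<lambda>(x,y). (h x y - s x y)^2) integrable_on Tbox" and "\<delta> > 0"
  shows "norm (fcoef h p q - fcoef s p q)
    \<le> \<delta> / 2 + integral Tbox (\<lambda>(x,y). (h x y - s x y)^2) / (2 * \<delta> * (4 * pi^2))"
proof -
  define A :: real where "A = 4 * pi^2"
  have "A > 0" unfolding A_def by simp
  define H where "H z = h (fst z) (snd z)" for z
  define S where "S z = s (fst z) (snd z)" for z
  define w where "w z = wave (- p, - q) (fst z) (snd z)" for z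
  define I where "I = integral Tbox (\<lambda>z. (H z - S z)^2)"
  have H: "H measurable_on Tbox" and S: "continuous_on Tbox S"
    and L2: "(\<lambda>z. (H z - S z)^2) integrable_on Tbox"
    using h s L2 by (simp_all add: H_def[abs_def] S_def[abs_def] case_prod_beta')
  have Hw: "(\<lambda>z. H z *\<^sub>R w z) integrable_on Tbox"
  proof (rule integrable_on_Tbox_if_measurable_bounded)
    show "(\<lambda>z. H z *\<^sub>R w z) measurable_on Tbox"
      using H by (rule measurable_on_scaleR) (simp add: w_def measurable_on_Tbox_if_continuous continuous_intros)
    have "(\<lambda>z. (H z)^2) integrable_on Tbox"
      by (rule integrable_square_if_L2_close[OF H S L2])
    then show "(\<lambda>z. 1 / 2 + (H z)^2 / (2 * 1)) integrable_on Tbox"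
      unfolding Tbox_def by (intro integrable_add integrable_on_divide integrable_const)
    show "norm (H z *\<^sub>R w z) \<le> 1 / 2 + (H z)^2 / (2 * 1)" for z
      using abs_le_AM_GM[of 1 "H z"] by (simp add: w_def)
  qed
  have Sw: "(\<lambda>z. S z *\<^sub>R w z) integrable_on Tbox"
    using S unfolding Tbox_def w_def by (intro integrable_continuous continuous_intros)
  have "((\<lambda>z. \<delta> / 2) has_integral A *\<^sub>R (\<delta> / 2)) Tbox"
    using has_integral_const[of "\<delta> / 2" "(0,0)" "(2 * pi, 2 * pi)"]
    by (simp add: Tbox_def A_def content_Pair power2_eq_square)
  moreover have "((\<lambda>z. (H z - S z)^2 / (2 * \<delta>)) has_integral I / (2 * \<delta>)) Tbox"
    unfolding I_def using L2 by (intro has_integral_divide integrable_integral)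
  ultimately have majorant:
    "((\<lambda>z. \<delta> / 2 + (H z - S z)^2 / (2 * \<delta>)) has_integral A * \<delta> / 2 + I / (2 * \<delta>)) Tbox"
    by (auto dest: has_integral_add)
  have "(\<lambda>z. (H z - S z) *\<^sub>R w z) integrable_on Tbox"
    using integrable_diff[OF Hw Sw] by (simp add: scaleR_diff_left)
  moreover have "norm ((H z - S z) *\<^sub>R w z) \<le> \<delta> / 2 + (H z - S z)^2 / (2 * \<delta>)" for z
    using abs_le_AM_GM[OF \<open>\<delta> > 0\<close>, of "H z - S z"] by (simp add: w_def)
  ultimately have "norm (integral Tbox (\<lambda>z. (H z - S z) *\<^sub>R w z))
      \<le> integral Tbox (\<lambda>z. \<delta> / 2 + (H z - S z)^2 / (2 * \<delta>))"
    by (intro integral_norm_bound_integral[OF _ has_integral_integrable[OF majorant]])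
  also have "\<dots> = A * \<delta> / 2 + I / (2 * \<delta>)"
    by (rule integral_unique[OF majorant])
  finally have integral_bound: "norm (integral Tbox (\<lambda>z. (H z - S z) *\<^sub>R w z)) \<le> A * \<delta> / 2 + I / (2 * \<delta>)" .
  have "fcoef h p q - fcoef s p q = integral Tbox (\<lambda>z. (H z - S z) *\<^sub>R w z) / complex_of_real A"
    unfolding fcoef_eq_integral_wave A_def
    using Hw Sw by (simp add: H_def S_def w_def case_prod_beta' integral_diff diff_divide_distrib scaleR_diff_left)
  then have "norm (fcoef h p q - fcoef s p q) = norm (integral Tbox (\<lambda>z. (H z - S z) *\<^sub>R w z)) / A"
    using \<open>A > 0\<close> by (simp add: norm_divide)
  also have "\<dots> \<le> (A * \<delta> / 2 + I / (2 * \<delta>)) / A"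
    using integral_bound \<open>A > 0\<close> by (simp add: divide_right_mono)
  also have "\<dots> = \<delta> / 2 + I / (2 * \<delta> * A)"
    using \<open>A > 0\<close> by (simp add: field_simps)
  finally show ?thesis
    by (simp add: I_def A_def H_def S_def case_prod_beta')
qed

lemma fcoef_tendsto_if_L2_convergent:
  fixes h :: "real \<Rightarrow> real \<Rightarrow> real" and s :: "nat \<Rightarrow> real \<Rightarrow> real \<Rightarrow> real"
  assumes h: "(\<lambda>(x,y). h x y) measurable_on Tbox"
    and s: "\<And>N. continuous_on Tbox (\<lambda>(x,y). s N x y)"
    and L2: "\<And>N. (\<lambda>(x,y). (h x y - s N x y)^2) integrable_on Tbox"
    and lim: "(\<lambda>N. integral Tbox (\<lambda>(x,y). (h x y - s N x y)^2)) \<longlonglongrightarrow> 0"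
  shows "(\<lambda>N. fcoef (s N) p q) \<longlonglongrightarrow> fcoef h p q"
proof (rule tendstoI)
  define A :: real where "A = 4 * pi^2"
  have "A > 0" unfolding A_def by simp
  fix e :: real assume "e > 0"
  then have "eventually (\<lambda>N. integral Tbox (\<lambda>(x,y). (h x y - s N x y)^2) < A * e^2) sequentially"
    using lim \<open>A > 0\<close> by (intro order_tendstoD(2)) auto
  then show "eventually (\<lambda>N. dist (fcoef (s N) p q) (fcoef h p q) < e) sequentially"
  proof (rule eventually_mono)
    fix N assume "integral Tbox (\<lambda>(x,y). (h x y - s N x y)^2) < A * e^2"
    then have "integral Tbox (\<lambda>(x,y). (h x y - s N x y)^2) / (2 * e * (4 * pi^2)) < e / 2"
      using \<open>e > 0\<close> \<open>A > 0\<close> unfolding A_def by (simp add: field_simps power2_eq_square)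
    then have "norm (fcoef h p q - fcoef (s N) p q) < e"
      using norm_fcoef_diff_le[OF h s L2 \<open>e > 0\<close>, of p q N] by linarith
    then show "dist (fcoef (s N) p q) (fcoef h p q) < e"
      by (simp add: dist_norm norm_minus_commute)
  qed
qed

lemma fcoef_line_sum:
  fixes n m :: int
  assumes "(n, m) \<noteq> (0, 0)" and "\<bar>p\<bar> + \<bar>q\<bar> \<le> int N"
  shows "fcoef (\<lambda>x y. \<Sum>k\<in>{- int N..int N}. A k * cos (real_of_int (k * n) * x + real_of_int (k * m) * y)
                                          + B k * sin (real_of_int (k * n) * x + real_of_int (k * m) * y)) p q
    = (\<Sum>k\<in>{k. (k * n, k * m) = (p, q)}. (A k - \<i> * B k) / 2)
      + (\<Sum>k\<in>{k. (k * n, k * m) = (- p, - q)}. (A k + \<i> * B k) / 2)"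
proof -
  have "\<bar>k\<bar> \<le> \<bar>p\<bar> + \<bar>q\<bar>" if "(k * n, k * m) = (p, q) \<or> (k * n, k * m) = (- p, - q)" for k
  proof -
    have "\<bar>p\<bar> + \<bar>q\<bar> = \<bar>k\<bar> * (\<bar>n\<bar> + \<bar>m\<bar>)"
      using that by (auto simp: abs_mult distrib_left equation_minus_iff)
    also have "\<dots> \<ge> \<bar>k\<bar>"
      using assms(1) by (simp add: mult_le_cancel_left1) linarith
    finally show ?thesis .
  qed
  then have "{k \<in> {- int N..int N}. (k * n, k * m) = (p, q)} = {k. (k * n, k * m) = (p, q)}"
    and "{k \<in> {- int N..int N}. (k * n, k * m) = (- p, - q)} = {k. (k * n, k * m) = (- p, - q)}"
    using assms(2) by fastforce+
  then show ?thesis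
    using fcoef_cos_sin_sum[of "{- int N..int N}" A "\<lambda>k. (k * n, k * m)" B p q] by simp
qed

lemma sqg_solution_line_series:
  fixes \<kappa> \<alpha> :: real and n m :: int and a b :: "int \<Rightarrow> real" and \<theta> :: "real \<Rightarrow> real \<Rightarrow> real \<Rightarrow> real"
    and S :: "real \<Rightarrow> nat \<Rightarrow> real \<Rightarrow> real \<Rightarrow> real"
  defines "S t N x y \<equiv> \<Sum>k\<in>{- int N..int N}. exp (- \<kappa> * fpow (real_of_int (n^2 * k^2 + m^2 * k^2)) \<alpha> * t) *
        (a k * cos (real_of_int (k * n) * x + real_of_int (k * m) * y)
         + b k * sin (real_of_int (k * n) * x + real_of_int (k * m) * y))"
  assumes "(n, m) \<noteq> (0, 0)"
    and measurable: "\<And>t. t \<ge> 0 \<Longrightarrow> (\<lambda>(x,y). \<theta> x y t) measurable_on Tbox"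
    and L2: "\<And>t N. t \<ge> 0 \<Longrightarrow> (\<lambda>(x,y). (\<theta> x y t - S t N x y)^2) integrable_on Tbox"
    and lim: "\<And>t. t \<ge> 0 \<Longrightarrow> (\<lambda>N. integral Tbox (\<lambda>(x,y). (\<theta> x y t - S t N x y)^2)) \<longlonglongrightarrow> 0"
  shows "sqg_solution \<kappa> \<alpha> \<theta>"
proof -
  define C where "C p q = (\<Sum>k\<in>{k. (k * n, k * m) = (p, q)}. (a k - \<i> * b k) / 2)
      + (\<Sum>k\<in>{k. (k * n, k * m) = (- p, - q)}. (a k + \<i> * b k) / 2)" for p q
  have fcoef_S: "fcoef (S t N) p q = complex_of_real (exp (- \<kappa> * frac_symbol \<alpha> p q * t)) * C p q"
    if "\<bar>p\<bar> + \<bar>q\<bar> \<le> int N" for t N p q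
  proof -
    define e where "e k = exp (- \<kappa> * fpow (real_of_int (n^2 * k^2 + m^2 * k^2)) \<alpha> * t)" for k
    have e_fiber: "e k = exp (- \<kappa> * frac_symbol \<alpha> p q * t)"
      if "k \<in> {k. (k * n, k * m) = (p, q)} \<union> {k. (k * n, k * m) = (- p, - q)}" for k
      using that by (auto simp: e_def frac_symbol_def power_mult_distrib algebra_simps equation_minus_iff)
    have "S t N = (\<lambda>x y. \<Sum>k\<in>{- int N..int N}.
        (e k * a k) * cos (real_of_int (k * n) * x + real_of_int (k * m) * y)
        + (e k * b k) * sin (real_of_int (k * n) * x + real_of_int (k * m) * y))"
      by (simp add: S_def e_def fun_eq_iff distrib_left mult.assoc)
    then have "fcoef (S t N) p q
        = (\<Sum>k\<in>{k. (k * n, k * m) = (p, q)}. (complex_of_real (e k * a k) - \<i> * complex_of_real (e k * b k)) / 2)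
        + (\<Sum>k\<in>{k. (k * n, k * m) = (- p, - q)}. (complex_of_real (e k * a k) + \<i> * complex_of_real (e k * b k)) / 2)"
      using fcoef_line_sum[OF \<open>(n, m) \<noteq> (0, 0)\<close> that] by simp
    also have "\<dots> = complex_of_real (exp (- \<kappa> * frac_symbol \<alpha> p q * t)) * C p q"
      unfolding C_def distrib_left sum_distrib_left using e_fiber
      by (intro arg_cong2[where f = "(+)"] sum.cong refl) (auto simp: algebra_simps diff_divide_distrib add_divide_distrib)
    finally show ?thesis .
  qed
  show ?thesis
  proof (rule sqg_solutionI[where C = C])
    fix t :: real assume "t \<ge> 0"
    show "(\<lambda>(x,y). \<theta> x y t) measurable_on Tbox"
      using measurable[OF \<open>t \<ge> 0\<close>] .
    have S_continuous: "continuous_on Tbox (\<lambda>(x,y). S t N x y)" for N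
      unfolding S_def case_prod_beta' by (intro continuous_intros)
    show "(\<lambda>(x,y). (\<theta> x y t)^2) integrable_on Tbox"
      using integrable_square_if_L2_close[of "\<lambda>z. \<theta> (fst z) (snd z) t" "\<lambda>z. S t 0 (fst z) (snd z)"]
        measurable[OF \<open>t \<ge> 0\<close>] S_continuous[of 0] L2[OF \<open>t \<ge> 0\<close>, of 0]
      by (simp add: case_prod_beta')
    show coef: "fcoef (\<lambda>x y. \<theta> x y t) p q = complex_of_real (exp (- \<kappa> * frac_symbol \<alpha> p q * t)) * C p q"
      for p q
    proof (rule LIMSEQ_unique)
      show "(\<lambda>N. fcoef (S t N) p q) \<longlonglongrightarrow> fcoef (\<lambda>x y. \<theta> x y t) p q"
        using measurable L2 lim \<open>t \<ge> 0\<close> S_continuous by (intro fcoef_tendsto_if_L2_convergent)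
      have "eventually (\<lambda>N. \<bar>p\<bar> + \<bar>q\<bar> \<le> int N) sequentially"
        by (rule eventually_sequentiallyI[of "nat (\<bar>p\<bar> + \<bar>q\<bar>)"]) simp
      then show "(\<lambda>N. fcoef (S t N) p q) \<longlonglongrightarrow> complex_of_real (exp (- \<kappa> * frac_symbol \<alpha> p q * t)) * C p q"
        by (intro tendsto_eventually) (auto elim: eventually_mono simp: fcoef_S)
    qed
    have on_line: "\<exists>k. j = (k * n, k * m)" if "j \<in> fourier_support (\<lambda>x y. \<theta> x y t)" for j
    proof -
      have "C (fst j) (snd j) \<noteq> 0"
        using that by (simp add: fourier_support_def coef)
      then obtain k where "(k * n, k * m) = j \<or> (k * n, k * m) = (- fst j, - snd j)"
        unfolding C_def by (metis (mono_tags, lifting) add.right_neutral mem_Collect_eq prod.collapse sum.neutral)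
      then show ?thesis
        by (metis minus_minus mult_minus_left prod.collapse prod.inject)
    qed
    have collinear: "fst j * snd l = snd j * fst l"
      if "j \<in> fourier_support (\<lambda>x y. \<theta> x y t)" "l \<in> fourier_support (\<lambda>x y. \<theta> x y t)" for j l
      using on_line[OF that(1)] on_line[OF that(2)] by auto
    show "transport_term (\<lambda>x y. \<theta> x y t) p q summable_on UNIV" for p q
      by (rule transport_coef_collinear_support(1)[OF collinear])
    show "transport_coef (\<lambda>x y. \<theta> x y t) p q = 0" for p q
      by (rule transport_coef_collinear_support(2)[OF collinear])
  qed
qed

theorem theorem1:
  fixes \<kappa> \<alpha> :: real
  assumes "0 \<le> \<alpha>" and "\<alpha> < 1" and "\<kappa> > 0"
  shows
   "(\<forall>(c1::real) c2 c3 c4 c5 c6 c7 c8 (n::int) (m::int) (k::int).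
       n * m \<noteq> 0 \<longrightarrow>
       ((\<bar>c1\<bar> + \<bar>c2\<bar> + \<bar>c3\<bar> + \<bar>c4\<bar>) * (\<bar>c5\<bar> + \<bar>c6\<bar> + \<bar>c7\<bar> + \<bar>c8\<bar>) \<noteq> 0
          \<longrightarrow> n^2 + m^2 = k^2) \<longrightarrow>
       sqg_solution \<kappa> \<alpha> (\<lambda>x y t.
          exp (- \<kappa> * fpow (real_of_int (n^2 + m^2)) \<alpha> * t) *
            (c1 * sin (n * x) * sin (m * y) + c2 * cos (n * x) * sin (m * y)
             + c3 * sin (n * x) * cos (m * y) + c4 * cos (n * x) * cos (m * y))
        + exp (- \<kappa> * fpow (real_of_int \<bar>k\<bar>) (2 * \<alpha>) * t) *
            (c5 * sin (k * x) + c6 * sin (k * y) + c7 * cos (k * x) + c8 * cos (k * y))))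
    \<and>
    (\<forall>(n::int) (m::int) (a::int \<Rightarrow> real) (b::int \<Rightarrow> real) (\<theta>::real \<Rightarrow> real \<Rightarrow> real \<Rightarrow> real).
       \<bar>n\<bar> + \<bar>m\<bar> \<noteq> 0 \<longrightarrow>
       (\<lambda>k. real_of_int \<bar>k\<bar> * ((a k)^2 + (b k)^2)) summable_on UNIV \<longrightarrow>
       (\<forall>t\<ge>0.
          let S = (\<lambda>(N::nat) x y. \<Sum>k\<in>{- int N..int N}.
                    exp (- \<kappa> * fpow (real_of_int (n^2 * k^2 + m^2 * k^2)) \<alpha> * t) *
                    (a k * cos (k * n * x + k * m * y) + b k * sin (k * n * x + k * m * y)))
          in (\<lambda>(x,y). \<theta> x y t) measurable_on Tbox
             \<and> (\<forall>N. (\<lambda>(x,y). (\<theta> x y t - S N x y)^2) integrable_on Tbox)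
             \<and> (\<lambda>N. integral Tbox (\<lambda>(x,y). (\<theta> x y t - S N x y)^2)) \<longlonglongrightarrow> 0) \<longrightarrow>
       sqg_solution \<kappa> \<alpha> \<theta>)"
  apply (intro conjI allI impI)
  subgoal
    by (rule sqg_solution_product_modes) (use assms(1) in auto)
  subgoal for n m a b \<theta>
    by (rule sqg_solution_line_series[where n = n and m = m and a = a and b = b]) (auto simp: Let_def)
  done

end
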